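(* Let $p$ be a prime and let $G$ be a non-abelian, non-metacyclic group of order $p^3$. Then there exist at least $p+1$ pairwise non-isomorphic local nearrings whose additive group is isomorphic to $G$.
   Context: A (left) nearring is a set $R$ with two binary operations $+$ and $\cdot$ such that $(R,+)$ is a group (not necessarily abelian) with neutral element $0$, $(R,\cdot)$ is a semigroup, and $x\cdot(y+z)=x\cdot y+x\cdot z$ for all $x,y,z\in R$. A nearring with identity is one where $(R,\cdot)$ is a monoid. A nearring $R$ with identity is called local if the set $L$ of all non-invertible elements of $(R,\cdot)$ is a subgroup of $(R,+)$. The additive group of $R$ is $(R,+)$. Two nearrings are isomorphic if there is a bijection preserving both operations. *)

theory Defs
  imports "HOL-Algebra.Algebra"
begin

definition metacyclic :: "('a, 'b) monoid_scheme \<Rightarrow> bool" where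
  "metacyclic G \<longleftrightarrow>
     (\<exists>N. N \<lhd> G \<and> cyclic_group (G\<lparr>carrier := N\<rparr>) \<and> cyclic_group (G Mod N))"

definition nearring :: "('a, 'b) ring_scheme \<Rightarrow> bool" where
  "nearring R \<longleftrightarrow>
     group (add_monoid R) \<and>
     (\<forall>x\<in>carrier R. \<forall>y\<in>carrier R. x \<otimes>\<^bsub>R\<^esub> y \<in> carrier R) \<and>
     (\<forall>x\<in>carrier R. \<forall>y\<in>carrier R. \<forall>z\<in>carrier R.
        (x \<otimes>\<^bsub>R\<^esub> y) \<otimes>\<^bsub>R\<^esub> z = x \<otimes>\<^bsub>R\<^esub> (y \<otimes>\<^bsub>R\<^esub> z)) \<and>
     (\<forall>x\<in>carrier R. \<forall>y\<in>carrier R. \<forall>z\<in>carrier R.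
        x \<otimes>\<^bsub>R\<^esub> (y \<oplus>\<^bsub>R\<^esub> z) = (x \<otimes>\<^bsub>R\<^esub> y) \<oplus>\<^bsub>R\<^esub> (x \<otimes>\<^bsub>R\<^esub> z))"

definition nearring_with_identity :: "('a, 'b) ring_scheme \<Rightarrow> bool" where
  "nearring_with_identity R \<longleftrightarrow> nearring R \<and> monoid R"

definition local_nearring :: "('a, 'b) ring_scheme \<Rightarrow> bool" where
  "local_nearring R \<longleftrightarrow> nearring_with_identity R \<and>
     subgroup (carrier R - Units R) (add_monoid R)"

definition nearring_iso :: "('a, 'b) ring_scheme \<Rightarrow> ('c, 'd) ring_scheme \<Rightarrow> bool" where
  "nearring_iso R S \<longleftrightarrow> (\<exists>f. bij_betw f (carrier R) (carrier S) \<and>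
     (\<forall>x\<in>carrier R. \<forall>y\<in>carrier R.
        f (x \<oplus>\<^bsub>R\<^esub> y) = f x \<oplus>\<^bsub>S\<^esub> f y \<and> f (x \<otimes>\<^bsub>R\<^esub> y) = f x \<otimes>\<^bsub>S\<^esub> f y))"

end

theory Submission
  imports Defs "HOL-Number_Theory.Residue_Primitive_Roots"
begin

text \<open>A nonabelian group \<open>G\<close> of order \<open>p^3\<close> has centre of order \<open>p\<close> and abelian
  quotient by it.  If \<open>G\<close> is not metacyclic it has no element of order \<open>p^2\<close> (such an
  element would generate a normal subgroup with cyclic quotient), hence exponent \<open>p\<close>, and \<open>p\<close> is
  odd.  Choosing \<open>u, v\<close> with commutator \<open>z\<close>, the map \<open>(a, b, c) \<mapsto> u^a v^b z^(c + ab/2)\<close>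
  identifies \<open>G\<close> with \<open>(\<int>/p)^3\<close> under a polynomial group law.

  On these coordinates \<open>x \<cdot> y = (x1 y1, x2 y1 + x1^k y2, x3 y1 + x1^(k+1) y3)\<close> for \<open>k < p\<close>,
  and for \<open>k = 2\<close> its variant with the extra term \<open>x1 x2 y2\<close> in the last coordinate, are
  associative and left distributive, and the non-units are the triples with \<open>x1 = 0\<close>, a
  subgroup.  An isomorphism
  between two of them is additive and fixes the identity, so it commutes with the action of
  \<open>n \<cdot> 1\<close> on the centre, which is multiplication by \<open>n^(k+1)\<close>; by a primitive root this
  determines \<open>k\<close> modulo \<open>p - 1\<close>.  The remaining coincidences are separated by the existence of
  a non-zero idempotent non-unit (\<open>k = 0\<close>) and by how the unit \<open>(1, 1, 0)\<close> acts on the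
  non-units (the twisted variant).\<close>

section \<open>Symmetric coordinates on triples of residues\<close>

type_synonym triple = "int \<times> int \<times> int"

definition residue_triples :: "int \<Rightarrow> triple set" where
  "residue_triples q = {0..<q} \<times> {0..<q} \<times> {0..<q}"

fun triple_mod :: "int \<Rightarrow> triple \<Rightarrow> triple" where
  "triple_mod q (a, b, c) = (a mod q, b mod q, c mod q)"

text \<open>The group law of \<open>coord\<close> below: \<open>(q + 1) div 2\<close> is the inverse of 2 modulo the odd
  modulus \<open>q\<close>.  Shifting the exponent of \<open>z\<close> by \<open>ab/2\<close> makes negation coordinatewise and
  lets \<open>nr_mult_poly\<close> distribute over \<open>heis_add_poly\<close> as a polynomial identity.\<close>
fun heis_add_poly :: "int \<Rightarrow> triple \<Rightarrow> triple \<Rightarrow> triple" where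
  "heis_add_poly q (a, b, c) (a', b', c') =
     (a + a', b + b', c + c' + (q + 1) div 2 * (a' * b - a * b'))"

fun nr_mult_poly :: "nat \<Rightarrow> bool \<Rightarrow> triple \<Rightarrow> triple \<Rightarrow> triple" where
  "nr_mult_poly k s (x1, x2, x3) (y1, y2, y3) =
     (x1 * y1, x2 * y1 + x1 ^ k * y2,
      x3 * y1 + (if s then x1 * x2 * y2 else 0) + x1 ^ Suc k * y3)"

definition heis_add :: "int \<Rightarrow> triple \<Rightarrow> triple \<Rightarrow> triple" where
  "heis_add q x y = triple_mod q (heis_add_poly q x y)"

definition nr_mult :: "int \<Rightarrow> nat \<Rightarrow> bool \<Rightarrow> triple \<Rightarrow> triple \<Rightarrow> triple" where
  "nr_mult q k s x y = triple_mod q (nr_mult_poly k s x y)"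

lemma mem_residue_triples [simp]:
  "(a, b, c) \<in> residue_triples q \<longleftrightarrow> 0 \<le> a \<and> a < q \<and> 0 \<le> b \<and> b < q \<and> 0 \<le> c \<and> c < q"
  by (auto simp: residue_triples_def)

lemma finite_residue_triples: "finite (residue_triples q)"
  by (simp add: residue_triples_def)

lemma card_residue_triples: "card (residue_triples (int p)) = p ^ 3"
  by (simp add: residue_triples_def card_cartesian_product power3_eq_cube)

lemma triple_mod_eq_iff:
  "triple_mod q (a, b, c) = triple_mod q (a', b', c') \<longleftrightarrow>
     [a = a'] (mod q) \<and> [b = b'] (mod q) \<and> [c = c'] (mod q)"
  by (simp add: cong_def)

lemma triple_mod_idem [simp]: "triple_mod q (triple_mod q x) = triple_mod q x"
  by (cases x) simp

lemma triple_mod_in_residue_triples: "q > 0 \<Longrightarrow> triple_mod q x \<in> residue_triples q"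
  by (cases x) simp

lemma triple_mod_residue_triple: "x \<in> residue_triples q \<Longrightarrow> triple_mod q x = x"
  by (cases x) simp

lemma heis_add_closed: "q > 0 \<Longrightarrow> heis_add q x y \<in> residue_triples q"
  by (simp add: heis_add_def triple_mod_in_residue_triples)

lemma nr_mult_closed: "q > 0 \<Longrightarrow> nr_mult q k s x y \<in> residue_triples q"
  by (simp add: nr_mult_def triple_mod_in_residue_triples)

lemma heis_add_poly_cong:
  assumes "triple_mod q x = triple_mod q x'" "triple_mod q y = triple_mod q y'"
  shows "triple_mod q (heis_add_poly q x y) = triple_mod q (heis_add_poly q x' y')"
proof -
  obtain x1 x2 x3 y1 y2 y3 x1' x2' x3' y1' y2' y3'
    where xy: "x = (x1, x2, x3)" "y = (y1, y2, y3)" "x' = (x1', x2', x3')" "y' = (y1', y2', y3')"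
    by (metis prod.exhaust)
  from assms have h: "[x1 = x1'] (mod q)" "[x2 = x2'] (mod q)" "[x3 = x3'] (mod q)"
    "[y1 = y1'] (mod q)" "[y2 = y2'] (mod q)" "[y3 = y3'] (mod q)"
    unfolding xy triple_mod_eq_iff by auto
  show ?thesis
    unfolding xy heis_add_poly.simps triple_mod_eq_iff
    by (intro conjI cong_add cong_mult cong_diff cong_refl h)
qed

lemma nr_mult_poly_cong:
  assumes "triple_mod q x = triple_mod q x'" "triple_mod q y = triple_mod q y'"
  shows "triple_mod q (nr_mult_poly k s x y) = triple_mod q (nr_mult_poly k s x' y')"
proof -
  obtain x1 x2 x3 y1 y2 y3 x1' x2' x3' y1' y2' y3'
    where xy: "x = (x1, x2, x3)" "y = (y1, y2, y3)" "x' = (x1', x2', x3')" "y' = (y1', y2', y3')"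
    by (metis prod.exhaust)
  from assms have h: "[x1 = x1'] (mod q)" "[x2 = x2'] (mod q)" "[x3 = x3'] (mod q)"
    "[y1 = y1'] (mod q)" "[y2 = y2'] (mod q)" "[y3 = y3'] (mod q)"
    unfolding xy triple_mod_eq_iff by auto
  show ?thesis
    unfolding xy nr_mult_poly.simps triple_mod_eq_iff
    by (cases s) (simp_all, (intro conjI cong_add cong_mult cong_pow cong_refl h)+)
qed

lemma heis_add_mod_left [simp]: "heis_add q (triple_mod q x) y = heis_add q x y"
  and heis_add_mod_right [simp]: "heis_add q x (triple_mod q y) = heis_add q x y"
  unfolding heis_add_def
  by (simp_all add: heis_add_poly_cong[OF triple_mod_idem refl]
      heis_add_poly_cong[OF refl triple_mod_idem])

lemma nr_mult_mod_left [simp]: "nr_mult q k s (triple_mod q x) y = nr_mult q k s x y"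
  and nr_mult_mod_right [simp]: "nr_mult q k s x (triple_mod q y) = nr_mult q k s x y"
  unfolding nr_mult_def
  by (simp_all add: nr_mult_poly_cong[OF triple_mod_idem refl]
      nr_mult_poly_cong[OF refl triple_mod_idem])

lemma nr_mult_heis_add_distrib:
  "nr_mult q k s x (heis_add q y w) = heis_add q (nr_mult q k s x y) (nr_mult q k s x w)"
proof -
  obtain x1 x2 x3 y1 y2 y3 w1 w2 w3
    where xyw: "x = (x1, x2, x3)" "y = (y1, y2, y3)" "w = (w1, w2, w3)"
    by (metis prod.exhaust)
  have "nr_mult q k s x (heis_add q y w) = triple_mod q (nr_mult_poly k s x (heis_add_poly q y w))"
    by (simp add: heis_add_def flip: nr_mult_def)
  also have "nr_mult_poly k s x (heis_add_poly q y w) =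
      heis_add_poly q (nr_mult_poly k s x y) (nr_mult_poly k s x w)"
    unfolding xyw by (simp add: algebra_simps)
  also have "triple_mod q \<dots> = heis_add q (nr_mult q k s x y) (nr_mult q k s x w)"
    by (simp add: nr_mult_def flip: heis_add_def)
  finally show ?thesis .
qed

lemma nr_mult_assoc:
  assumes "s \<longrightarrow> k = 2"
  shows "nr_mult q k s (nr_mult q k s x y) w = nr_mult q k s x (nr_mult q k s y w)"
proof -
  obtain x1 x2 x3 y1 y2 y3 w1 w2 w3
    where xyw: "x = (x1, x2, x3)" "y = (y1, y2, y3)" "w = (w1, w2, w3)"
    by (metis prod.exhaust)
  have "nr_mult q k s (nr_mult q k s x y) w =
      triple_mod q (nr_mult_poly k s (nr_mult_poly k s x y) w)"
    by (simp only: nr_mult_def[of q k s x y] nr_mult_mod_left) (simp add: nr_mult_def)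
  also have "nr_mult_poly k s (nr_mult_poly k s x y) w = nr_mult_poly k s x (nr_mult_poly k s y w)"
    using assms unfolding xyw
    by (cases s) (simp_all add: algebra_simps power_mult_distrib power2_eq_square power3_eq_cube)
  also have "triple_mod q \<dots> = nr_mult q k s x (nr_mult q k s y w)"
    by (simp only: nr_mult_def[of q k s y w] nr_mult_mod_right) (simp add: nr_mult_def)
  finally show ?thesis .
qed

lemma coprime_if_less_prime:
  fixes q a :: int
  assumes "Factorial_Ring.prime q" "0 < a" "a < q"
  shows "coprime a q"
proof -
  have "\<not> q dvd a" using assms by (auto dest: zdvd_imp_le)
  then show ?thesis using assms(1) prime_imp_coprime coprime_commute by blast
qed

lemma nr_mult_one_left: "x \<in> residue_triples q \<Longrightarrow> nr_mult q k s (1, 0, 0) x = x"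
  and nr_mult_one_right: "x \<in> residue_triples q \<Longrightarrow> nr_mult q k s x (1, 0, 0) = x"
  by (cases x; simp add: nr_mult_def)+

lemma inj_on_nr_mult:
  assumes q: "Factorial_Ring.prime q" and x: "x \<in> residue_triples q" "fst x \<noteq> 0"
  shows "inj_on (nr_mult q k s x) (residue_triples q)"
proof (rule inj_onI)
  fix y y' assume y: "y \<in> residue_triples q" and y': "y' \<in> residue_triples q"
    and eq: "nr_mult q k s x y = nr_mult q k s x y'"
  obtain x1 x2 x3 y1 y2 y3 y1' y2' y3'
    where xy: "x = (x1, x2, x3)" "y = (y1, y2, y3)" "y' = (y1', y2', y3')"
    by (metis prod.exhaust)
  have cop: "coprime x1 q" "coprime (x1 ^ n) q" "coprime (x1 * x1 ^ n) q" for n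
    using coprime_if_less_prime[OF q, of x1] x unfolding xy by auto
  from eq have "[x1 * y1 = x1 * y1'] (mod q)"
    and e2: "[x2 * y1 + x1 ^ k * y2 = x2 * y1' + x1 ^ k * y2'] (mod q)"
    and e3: "[x3 * y1 + (if s then x1 * x2 * y2 else 0) + x1 ^ Suc k * y3 =
              x3 * y1' + (if s then x1 * x2 * y2' else 0) + x1 ^ Suc k * y3'] (mod q)"
    unfolding xy nr_mult_def by (simp_all only: nr_mult_poly.simps triple_mod_eq_iff)
  then have 1: "y1 = y1'"
    using y y' unfolding xy
    by (intro cong_less_imp_eq_int) (auto simp: cong_mult_lcancel[OF cop(1)])
  with e2 have 2: "y2 = y2'"
    using y y' unfolding xy
    by (intro cong_less_imp_eq_int) (auto simp: cong_add_lcancel cong_mult_lcancel[OF cop(2)])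
  with 1 e3 have 3: "y3 = y3'"
    using y y' unfolding xy
    by (intro cong_less_imp_eq_int) (auto simp: cong_add_lcancel cong_mult_lcancel[OF cop(3)])
  from 1 2 3 show "y = y'" unfolding xy by simp
qed

lemma not_inj_on_nr_mult:
  assumes "q > 1" "fst x = 0"
  shows "\<not> inj_on (nr_mult q k s x) (residue_triples q)"
proof
  assume "inj_on (nr_mult q k s x) (residue_triples q)"
  moreover have "nr_mult q k s x (1, 0, 0) = nr_mult q k s x (1, 0, 1)"
    using assms(2) by (cases x) (simp add: nr_mult_def)
  ultimately show False using assms(1) by (auto dest: inj_onD)
qed

lemma heis_add_commute_iff:
  assumes q: "Factorial_Ring.prime q" "odd q" and x: "x \<in> residue_triples q"
  shows "(\<forall>y\<in>residue_triples q. heis_add q x y = heis_add q y x) \<longleftrightarrow> fst x = 0 \<and> fst (snd x) = 0"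
proof
  obtain a b c where xx: "x = (a, b, c)" by (metis prod.exhaust)
  have q1: "q > 1" using q prime_gt_1_int by blast
  have "2 * ((q + 1) div 2) = q + 1" using q(2) by presburger
  then have two_half: "[2 * ((q + 1) div 2) * t = t] (mod q)" for t
    by (simp add: cong_iff_dvd_diff algebra_simps)
  assume comm: "\<forall>y\<in>residue_triples q. heis_add q x y = heis_add q y x"
  have "heis_add q x (1, 0, 0) = heis_add q (1, 0, 0) x"
    and "heis_add q x (0, 1, 0) = heis_add q (0, 1, 0) x"
    using comm q1 by auto
  then have "[c + (q + 1) div 2 * b = c - (q + 1) div 2 * b] (mod q)"
    "[c - (q + 1) div 2 * a = c + (q + 1) div 2 * a] (mod q)"
    unfolding xx heis_add_def by (simp_all add: cong_def)
  then have "[2 * ((q + 1) div 2) * b = 0] (mod q)" "[2 * ((q + 1) div 2) * a = 0] (mod q)"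
    by (simp_all add: cong_iff_dvd_diff algebra_simps)
  then have "[b = 0] (mod q)" "[a = 0] (mod q)"
    using two_half[of a] two_half[of b] cong_trans cong_sym by meson+
  then show "fst x = 0 \<and> fst (snd x) = 0"
    using x unfolding xx by (auto intro: cong_less_imp_eq_int)
next
  assume "fst x = 0 \<and> fst (snd x) = 0"
  then show "\<forall>y\<in>residue_triples q. heis_add q x y = heis_add q y x"
    by (cases x) (auto simp: heis_add_def add.commute)
qed

lemma heis_add_idem_imp_zero:
  assumes "x \<in> residue_triples q" "heis_add q x x = x"
  shows "x = (0, 0, 0)"
proof -
  obtain a b c where xx: "x = (a, b, c)" by (metis prod.exhaust)
  from assms have "triple_mod q (a + a, b + b, c + c) = triple_mod q (a + 0, b + 0, c + 0)"
    unfolding xx heis_add_def by (simp add: triple_mod_residue_triple)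
  then have "[a = 0] (mod q)" "[b = 0] (mod q)" "[c = 0] (mod q)"
    unfolding triple_mod_eq_iff cong_add_lcancel by auto
  then show ?thesis
    using assms(1) unfolding xx by (auto intro: cong_less_imp_eq_int)
qed

fun heis_neg :: "int \<Rightarrow> triple \<Rightarrow> triple" where
  "heis_neg q (a, b, c) = triple_mod q (- a, - b, - c)"

lemma heis_neg_closed: "q > 0 \<Longrightarrow> heis_neg q x \<in> residue_triples q"
  by (cases x) (simp add: triple_mod_in_residue_triples)

lemma heis_add_neg: "heis_add q x (heis_neg q x) = (0, 0, 0)"
proof -
  obtain a b c where xx: "x = (a, b, c)" by (metis prod.exhaust)
  then have "heis_add q x (heis_neg q x) = heis_add q (a, b, c) (- a, - b, - c)"
    by (simp only: heis_neg.simps heis_add_mod_right)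
  also have "\<dots> = (0, 0, 0)"
    by (simp add: heis_add_def algebra_simps)
  finally show ?thesis .
qed

lemma heis_add_neg_eq_zero_imp_eq:
  assumes "x \<in> residue_triples q" "y \<in> residue_triples q" "heis_add q x (heis_neg q y) = (0, 0, 0)"
  shows "x = y"
proof -
  obtain a b c a' b' c' where xy: "x = (a, b, c)" "y = (a', b', c')" by (metis prod.exhaust)
  have "heis_add q x (heis_neg q y) = heis_add q x (- a', - b', - c')"
    unfolding xy by (simp only: heis_neg.simps heis_add_mod_right)
  with assms(3) have "triple_mod q (a - a', b - b', c - c' + (q + 1) div 2 * (a * b' - a' * b)) =
      triple_mod q (0, 0, 0)"
    unfolding xy heis_add_def by (simp add: algebra_simps)
  then have "[a = a'] (mod q)" "[b = b'] (mod q)"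
    and c: "[c - c' + (q + 1) div 2 * (a * b' - a' * b) = 0] (mod q)"
    unfolding triple_mod_eq_iff by (auto simp: cong_iff_dvd_diff)
  then have "a = a'" "b = b'"
    using assms(1,2) unfolding xy by (auto intro: cong_less_imp_eq_int)
  moreover from c this have "c = c'"
    using assms(1,2) unfolding xy by (intro cong_less_imp_eq_int) (auto simp: cong_iff_dvd_diff)
  ultimately show ?thesis unfolding xy by simp
qed

fun heis_scale :: "int \<Rightarrow> nat \<Rightarrow> triple \<Rightarrow> triple" where
  "heis_scale q 0 x = (0, 0, 0)"
| "heis_scale q (Suc n) x = heis_add q x (heis_scale q n x)"

lemma heis_scale_unit: "heis_scale q n (1, 0, 0) = (int n mod q, 0, 0)"
  by (induction n) (simp_all add: heis_add_def mod_simps add.commute)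

lemma heis_scale_central: "heis_scale q n (0, 0, c) = (0, 0, int n * c mod q)"
  by (induction n) (simp_all add: heis_add_def mod_simps algebra_simps)

lemma heis_scale_closed: "q > 0 \<Longrightarrow> heis_scale q n x \<in> residue_triples q"
  by (cases n) (simp_all add: heis_add_closed)

lemma nr_mult_unit_central:
  "nr_mult q k s (heis_scale q n (1, 0, 0)) (0, 0, c) = heis_scale q (n ^ Suc k) (0, 0, c)"
proof -
  have "heis_scale q n (1, 0, 0) = triple_mod q (int n, 0, 0)"
    by (simp add: heis_scale_unit)
  then have "nr_mult q k s (heis_scale q n (1, 0, 0)) (0, 0, c) =
      nr_mult q k s (int n, 0, 0) (0, 0, c)"
    by (simp only: nr_mult_mod_left)
  also have "\<dots> = heis_scale q (n ^ Suc k) (0, 0, c)"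
    by (simp add: nr_mult_def heis_scale_central algebra_simps)
  finally show ?thesis .
qed

lemma fst_nr_mult: "fst (nr_mult q k s x y) = fst x * fst y mod q"
  by (cases x, cases y) (simp add: nr_mult_def)

lemma exists_nr_mult_inverse:
  assumes q: "Factorial_Ring.prime q" and ks: "s \<longrightarrow> k = 2"
    and x: "x \<in> residue_triples q" "fst x \<noteq> 0"
  shows "\<exists>y\<in>residue_triples q. nr_mult q k s x y = (1, 0, 0) \<and> nr_mult q k s y x = (1, 0, 0)"
proof -
  have q1: "q > 1" using q prime_gt_1_int by blast
  have inj: "inj_on (nr_mult q k s x) (residue_triples q)" using inj_on_nr_mult[OF q x] .
  have "nr_mult q k s x ` residue_triples q = residue_triples q"
    using q1 by (intro endo_inj_surj[OF finite_residue_triples _ inj]) (auto simp: nr_mult_closed)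
  moreover have "(1, 0, 0) \<in> residue_triples q" using q1 by simp
  ultimately obtain y where y: "y \<in> residue_triples q" "nr_mult q k s x y = (1, 0, 0)"
    by (metis imageE)
  have "nr_mult q k s x (nr_mult q k s y x) = nr_mult q k s x (1, 0, 0)"
    using nr_mult_assoc[OF ks, of q x y x] y(2) nr_mult_one_left[OF x(1)] nr_mult_one_right[OF x(1)]
    by simp
  then have "nr_mult q k s y x = (1, 0, 0)"
    using inj q1 y(1) x(1) nr_mult_closed[of q] by (simp add: inj_on_eq_iff)
  with y show ?thesis by blast
qed

section \<open>Isomorphisms between the coordinate nearrings\<close>

locale coord_iso =
  fixes q :: int and k :: nat and s :: bool and k' :: nat and s' :: bool
    and g :: "triple \<Rightarrow> triple"
  assumes prime: "Factorial_Ring.prime q" and odd: "odd q"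
    and bij: "bij_betw g (residue_triples q) (residue_triples q)"
    and add: "\<And>x y. x \<in> residue_triples q \<Longrightarrow> y \<in> residue_triples q \<Longrightarrow>
      g (heis_add q x y) = heis_add q (g x) (g y)"
    and mult: "\<And>x y. x \<in> residue_triples q \<Longrightarrow> y \<in> residue_triples q \<Longrightarrow>
      g (nr_mult q k s x y) = nr_mult q k' s' (g x) (g y)"

lemma coord_iso_inv:
  assumes "coord_iso q k s k' s' g"
  shows "coord_iso q k' s' k s (inv_into (residue_triples q) g)"
proof -
  interpret coord_iso q k s k' s' g by fact
  let ?h = "inv_into (residue_triples q) g"
  have q0: "q > 0" using prime prime_gt_0_int by blast
  have h: "bij_betw ?h (residue_triples q) (residue_triples q)"
    using bij by (rule bij_betw_inv_into)
  have hg: "x \<in> residue_triples q \<Longrightarrow> ?h (g x) = x"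
    and gh: "y \<in> residue_triples q \<Longrightarrow> g (?h y) = y"
    and hT: "y \<in> residue_triples q \<Longrightarrow> ?h y \<in> residue_triples q" for x y
    using bij h by (auto simp: bij_betw_inv_into_left bij_betw_inv_into_right bij_betwE)
  show ?thesis
  proof (unfold_locales; (rule prime odd h)?)
    fix x y assume x: "x \<in> residue_triples q" and y: "y \<in> residue_triples q"
    have "?h (heis_add q x y) = ?h (heis_add q (g (?h x)) (g (?h y)))"
      using gh x y by simp
    also have "\<dots> = ?h (g (heis_add q (?h x) (?h y)))"
      using add[OF hT[OF x] hT[OF y]] by simp
    also have "\<dots> = heis_add q (?h x) (?h y)"
      using hg[OF heis_add_closed[OF q0]] .
    finally show "?h (heis_add q x y) = heis_add q (?h x) (?h y)" .
    have "?h (nr_mult q k' s' x y) = ?h (nr_mult q k' s' (g (?h x)) (g (?h y)))"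
      using gh x y by simp
    also have "\<dots> = ?h (g (nr_mult q k s (?h x) (?h y)))"
      using mult[OF hT[OF x] hT[OF y]] by simp
    also have "\<dots> = nr_mult q k s (?h x) (?h y)"
      using hg[OF nr_mult_closed[OF q0]] .
    finally show "?h (nr_mult q k' s' x y) = nr_mult q k s (?h x) (?h y)" .
  qed
qed

context coord_iso
begin

lemma q_gt_1: "q > 1"
  using prime prime_gt_1_int by blast

lemma closed: "x \<in> residue_triples q \<Longrightarrow> g x \<in> residue_triples q"
  using bij bij_betwE by blast

lemma inj: "x \<in> residue_triples q \<Longrightarrow> y \<in> residue_triples q \<Longrightarrow> g x = g y \<Longrightarrow> x = y"
  using bij by (auto simp: bij_betw_def inj_on_def)

lemma surj: "y \<in> residue_triples q \<Longrightarrow> \<exists>x\<in>residue_triples q. y = g x"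
  using bij by (auto simp: bij_betw_def)

lemma maps_zero: "g (0, 0, 0) = (0, 0, 0)"
proof (rule heis_add_idem_imp_zero)
  have "heis_add q (0, 0, 0) (0, 0, 0) = (0, 0, 0)" by (simp add: heis_add_def)
  then show "heis_add q (g (0, 0, 0)) (g (0, 0, 0)) = g (0, 0, 0)"
    using add[of "(0, 0, 0)" "(0, 0, 0)"] q_gt_1 by simp
qed (use closed q_gt_1 in simp)

lemma maps_one: "g (1, 0, 0) = (1, 0, 0)"
proof -
  have one: "(1, 0, 0) \<in> residue_triples q" using q_gt_1 by simp
  obtain x where x: "x \<in> residue_triples q" "(1, 0, 0) = g x" using surj[OF one] by blast
  have "g (1, 0, 0) = nr_mult q k' s' (g (1, 0, 0)) (g x)"
    using nr_mult_one_right[OF closed[OF one]] x(2)[symmetric] by simp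
  also have "\<dots> = g x"
    using mult[OF one x(1)] nr_mult_one_left[OF x(1)] by simp
  finally show ?thesis using x by simp
qed

lemma maps_fst_zero:
  assumes x: "x \<in> residue_triples q" "fst x = 0"
  shows "fst (g x) = 0"
proof (rule ccontr)
  assume "fst (g x) \<noteq> 0"
  then have "inj_on (nr_mult q k' s' (g x) \<circ> g) (residue_triples q)"
    using inj_on_nr_mult[OF prime closed[OF x(1)]] bij by (simp add: comp_inj_on bij_betw_def)
  moreover have "(nr_mult q k' s' (g x) \<circ> g) y = (g \<circ> nr_mult q k s x) y"
    if "y \<in> residue_triples q" for y
    using mult[OF x(1) that] by simp
  ultimately have "inj_on (g \<circ> nr_mult q k s x) (residue_triples q)"
    using inj_on_cong by blast
  then show False using not_inj_on_nr_mult[OF q_gt_1 x(2)] inj_on_imageI2 by blast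
qed

lemma maps_central:
  assumes x: "x \<in> residue_triples q" "fst x = 0" "fst (snd x) = 0"
  shows "fst (g x) = 0 \<and> fst (snd (g x)) = 0"
proof -
  have "heis_add q (g x) y = heis_add q y (g x)" if y: "y \<in> residue_triples q" for y
  proof -
    obtain y' where y': "y' \<in> residue_triples q" "y = g y'" using surj y by blast
    have "heis_add q x y' = heis_add q y' x"
      using heis_add_commute_iff[OF prime odd x(1)] x y' by auto
    then show ?thesis using add[OF x(1) y'(1)] add[OF y'(1) x(1)] y'(2) by simp
  qed
  then show ?thesis using heis_add_commute_iff[OF prime odd closed[OF x(1)]] by blast
qed

lemma maps_scale:
  assumes "x \<in> residue_triples q"
  shows "g (heis_scale q n x) = heis_scale q n (g x)"
proof (induction n)
  case (Suc n)
  have "heis_scale q n x \<in> residue_triples q" using heis_scale_closed q_gt_1 by simp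
  then show ?case using Suc add[OF assms] by simp
qed (simp add: maps_zero)

lemma maps_central_generator: "\<exists>c. 0 < c \<and> c < q \<and> g (0, 0, 1) = (0, 0, c)"
proof -
  have z: "(0, 0, 1) \<in> residue_triples q" using q_gt_1 by simp
  obtain a b c where gz: "g (0, 0, 1) = (a, b, c)" by (metis prod.exhaust)
  have "a = 0" "b = 0" using maps_central[OF z] gz by auto
  moreover have "0 \<le> c" "c < q" using closed[OF z] gz by auto
  moreover have "c \<noteq> 0"
  proof
    assume "c = 0"
    then have "g (0, 0, 1) = g (0, 0, 0)" using gz maps_zero \<open>a = 0\<close> \<open>b = 0\<close> by simp
    then show False using inj[OF z] q_gt_1 by fastforce
  qed
  ultimately show ?thesis using gz by auto
qed

lemma pow_Suc_exp_cong: "[int n ^ Suc k = int n ^ Suc k'] (mod q)"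
proof -
  obtain c where c: "0 < c" "c < q" "g (0, 0, 1) = (0, 0, c)" using maps_central_generator by blast
  have z: "(0, 0, 1) \<in> residue_triples q" and e: "heis_scale q n (1, 0, 0) \<in> residue_triples q"
    using q_gt_1 heis_scale_closed by simp_all
  have ge: "g (heis_scale q n (1, 0, 0)) = heis_scale q n (1, 0, 0)"
    using maps_scale maps_one q_gt_1 by simp
  have "heis_scale q (n ^ Suc k) (0, 0, c) = g (nr_mult q k s (heis_scale q n (1, 0, 0)) (0, 0, 1))"
    using maps_scale[OF z] c(3) by (simp add: nr_mult_unit_central)
  also have "\<dots> = heis_scale q (n ^ Suc k') (0, 0, c)"
    using mult[OF e z] ge c(3) by (simp add: nr_mult_unit_central)
  finally have "[int n ^ Suc k * c = int n ^ Suc k' * c] (mod q)"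
    by (simp add: heis_scale_central cong_def)
  then show ?thesis
    using cong_mult_rcancel coprime_if_less_prime[OF prime c(1,2)] by blast
qed

text \<open>For \<open>k = 0\<close> the non-unit \<open>(0, 1, 0)\<close> is idempotent (recall \<open>0 ^ 0 = 1\<close>), whereas for
  \<open>k \<ge> 1\<close> all products of two non-units vanish.\<close>
lemma exp_zero_imp_exp_zero: "k = 0 \<Longrightarrow> k' = 0"
proof (rule ccontr)
  assume "k = 0" "k' \<noteq> 0"
  have l: "(0, 1, 0) \<in> residue_triples q" and z: "(0, 0, 0) \<in> residue_triples q"
    using q_gt_1 by simp_all
  obtain a b c where gl: "g (0, 1, 0) = (a, b, c)" by (metis prod.exhaust)
  have "a = 0" using maps_fst_zero[OF l] gl by simp
  have "g (0, 1, 0) = g (nr_mult q k s (0, 1, 0) (0, 1, 0))"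
    using \<open>k = 0\<close> q_gt_1 by (simp add: nr_mult_def)
  also have "\<dots> = (0, 0, 0)"
    using mult[OF l l] gl \<open>a = 0\<close> \<open>k' \<noteq> 0\<close> by (simp add: nr_mult_def power_0_left)
  finally have "g (0, 1, 0) = g (0, 0, 0)" using maps_zero by simp
  then show False using inj[OF l z] by simp
qed

text \<open>With the twist, left multiplication by the unit \<open>(1, 1, 0)\<close> fixes the centre pointwise
  but moves \<open>(0, 1, 0)\<close> by a central element.  Without it, a unit \<open>x\<close> acts on the centre by
  \<open>x\<^sub>1\<^sup>3\<close>, so if it fixes the centre it preserves the last coordinate of every non-unit.\<close>
lemma twisted_imp_twisted: "k = 2 \<Longrightarrow> k' = 2 \<Longrightarrow> s \<Longrightarrow> s'"
proof (rule ccontr)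
  assume "k = 2" "k' = 2" "s" "\<not> s'"
  have u: "(1, 1, 0) \<in> residue_triples q" and l: "(0, 1, 0) \<in> residue_triples q"
    and z: "(0, 0, 1) \<in> residue_triples q"
    using q_gt_1 by simp_all
  obtain c where c: "0 < c" "c < q" "g (0, 0, 1) = (0, 0, c)" using maps_central_generator by blast
  obtain a b d where gu: "g (1, 1, 0) = (a, b, d)" by (metis prod.exhaust)
  obtain l2 l3 where gl: "g (0, 1, 0) = (0, l2, l3)"
    using maps_fst_zero[OF l] by (metis fst_conv prod.exhaust)
  have "nr_mult q k s (1, 1, 0) (0, 0, 1) = (0, 0, 1)"
    using \<open>k = 2\<close> q_gt_1 by (simp add: nr_mult_def)
  then have "(0, 0, c) = nr_mult q k' s' (a, b, d) (0, 0, c)"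
    using mult[OF u z] gu c(3) by simp
  also have "\<dots> = triple_mod q (0, 0, a ^ 3 * c)"
    using \<open>k' = 2\<close> \<open>\<not> s'\<close> by (simp add: nr_mult_def)
  finally have "triple_mod q (0, 0, c) = triple_mod q (0, 0, a ^ 3 * c)"
    using c by simp
  then have "[a ^ 3 * c = 1 * c] (mod q)"
    unfolding triple_mod_eq_iff by (simp add: cong_sym)
  then have a3: "[a ^ 3 = 1] (mod q)"
    using cong_mult_rcancel coprime_if_less_prime[OF prime c(1,2)] by blast
  have "nr_mult q k s (1, 1, 0) (0, 1, 0) = heis_add q (0, 1, 0) (0, 0, 1)"
    using \<open>k = 2\<close> \<open>s\<close> q_gt_1 by (simp add: nr_mult_def heis_add_def)
  then have "heis_add q (0, l2, l3) (0, 0, c) = nr_mult q k' s' (a, b, d) (0, l2, l3)"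
    using mult[OF u l] add[OF l z] gu gl c(3) by simp
  then have "triple_mod q (0, l2, l3 + c) = triple_mod q (0, a ^ 2 * l2, a ^ 3 * l3)"
    using \<open>k' = 2\<close> \<open>\<not> s'\<close> by (simp add: nr_mult_def heis_add_def)
  then have "[l3 + c = a ^ 3 * l3] (mod q)"
    unfolding triple_mod_eq_iff by blast
  moreover have "[a ^ 3 * l3 = 1 * l3] (mod q)"
    using a3 by (rule cong_mult) simp
  ultimately have "[l3 + c = l3 + 0] (mod q)" by (simp add: cong_trans)
  then have "[c = 0] (mod q)" by (simp only: cong_add_lcancel)
  then show False using c cong_less_imp_eq_int[of c q 0] by simp
qed

end

lemma cong_exponents_if_pow_cong:
  fixes p a b :: nat
  assumes p: "Factorial_Ring.prime p" and pow: "\<And>n::nat. [n ^ a = n ^ b] (mod p)"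
  shows "[a = b] (mod (p - 1))"
proof -
  obtain r where r: "residue_primroot p r"
    using prime_primitive_root_exists[OF prime_gt_1_nat[OF p] p] by blast
  then have "coprime p r" and "ord p r = p - 1"
    using p by (auto simp: residue_primroot_def totient_prime)
  then show ?thesis using order_divides_expdiff pow by metis
qed

lemma cong_le_modulus_cases:
  fixes i j m :: nat
  assumes "[i = j] (mod m)" "i \<le> m" "j \<le> m"
  shows "i = j \<or> {i, j} = {0, m}"
proof (cases i j rule: linorder_cases)
  case less
  then have "m dvd j - i" using cong_altdef_nat[of i j m] assms(1) by (simp add: cong_sym_eq)
  then have "m \<le> j - i" using less by (intro dvd_imp_le) auto
  then show ?thesis using assms(3) less by auto
next
  case greater
  then have "m dvd i - j" using cong_altdef_nat[of j i m] assms(1) by simp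
  then have "m \<le> i - j" using greater by (intro dvd_imp_le) auto
  then show ?thesis using assms(2) greater by auto
qed simp

lemma (in coord_iso) exp_unique:
  assumes q: "q = int p" and "k < p" "k' < p"
  shows "k = k'"
proof -
  have p: "Factorial_Ring.prime p" using prime q by (simp add: prime_nat_int_transfer)
  have "[n ^ Suc k = n ^ Suc k'] (mod p)" for n
    using pow_Suc_exp_cong[of n] q by (metis cong_int_iff of_nat_power)
  then have "[Suc k = Suc k'] (mod (p - 1))" by (rule cong_exponents_if_pow_cong[OF p])
  then have "[k = k'] (mod (p - 1))" using cong_add_rcancel_nat[of k 1 k'] by simp
  then have "k = k' \<or> {k, k'} = {0, p - 1}"
    using assms(2,3) by (intro cong_le_modulus_cases) simp_all
  moreover have "k' = 0 \<Longrightarrow> k = 0"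
    using coord_iso.exp_zero_imp_exp_zero[OF coord_iso_inv[OF coord_iso_axioms]] .
  moreover have "p - 1 \<noteq> 0" using prime_gt_1_nat[OF p] by simp
  ultimately show ?thesis using exp_zero_imp_exp_zero by (auto simp: doubleton_eq_iff)
qed

section \<open>Nonabelian groups of order \<open>p\<^sup>3\<close>\<close>

lemma (in group_action) eq_if_fixed_in_orbit:
  assumes x: "x \<in> E" and y: "y \<in> orbit G \<phi> x" and fixed: "\<forall>g\<in>carrier G. \<phi> g y = y"
  shows "x = y"
proof -
  obtain h where h: "h \<in> carrier G" "\<phi> h x = y" using y unfolding orbit_def by blast
  have "\<phi> (inv h) y = x" by (rule orbit_sym_aux[OF h(1) x h(2)])
  moreover have "inv h \<in> carrier G"
    using group.inv_closed[OF group_hom.axioms(1)[OF group_hom] h(1)] .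
  ultimately show "x = y" using fixed by auto
qed

lemma (in group_action) card_orbit_cong_fixed_points:
  assumes fin: "finite E" and p: "Factorial_Ring.prime p" and ord: "order G = p ^ n"
    and x: "x \<in> E"
  shows "[card (orbit G \<phi> x) = (\<Sum>y\<in>orbit G \<phi> x. if \<forall>g\<in>carrier G. \<phi> g y = y then 1 else 0)] (mod p)"
proof (cases "\<forall>g\<in>carrier G. \<phi> g x = x")
  case True
  have "\<one> \<in> carrier G"
    using monoid.one_closed[OF group.is_monoid[OF group_hom.axioms(1)[OF group_hom]]] .
  then have "orbit G \<phi> x = {x}"
    using True by (auto simp: orbit_def intro!: exI[of _ "\<one>"])
  then show ?thesis using True by simp
next
  case False
  then obtain g where g: "g \<in> carrier G" "\<phi> g x \<noteq> x" by blast
  have zero: "(\<Sum>y\<in>orbit G \<phi> x. if \<forall>g\<in>carrier G. \<phi> g y = y then 1 else 0) = (0::nat)"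
    using eq_if_fixed_in_orbit[OF x] False by (intro sum.neutral) fastforce
  have "card (orbit G \<phi> x) dvd p ^ n"
    unfolding ord[symmetric] orbit_stabilizer_theorem[OF x, symmetric] by (rule dvd_triv_left)
  then obtain i where i: "i \<le> n" "card (orbit G \<phi> x) = p ^ i"
    using p by (auto simp: divides_primepow_nat)
  have "{x, \<phi> g x} \<subseteq> orbit G \<phi> x"
    using orbit_refl[OF x] g(1) by (auto simp: orbit_def)
  moreover have "finite (orbit G \<phi> x)"
  proof (rule finite_subset[OF _ fin])
    show "orbit G \<phi> x \<subseteq> E"
      unfolding orbit_def using element_image[OF _ x refl] by auto
  qed
  ultimately have "card {x, \<phi> g x} \<le> card (orbit G \<phi> x)"
    by (rule card_mono[rotated])
  then have "i \<noteq> 0" using i(2) g(2) by (cases i) auto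
  then show ?thesis using i(2) zero by (simp add: cong_0_iff)
qed

lemma (in group_action) card_cong_card_fixed_points:
  assumes fin: "finite E" and p: "Factorial_Ring.prime p" and ord: "order G = p ^ n"
  shows "[card E = card {x \<in> E. \<forall>g\<in>carrier G. \<phi> g x = x}] (mod p)"
proof -
  let ?fixed = "\<lambda>y. if \<forall>g\<in>carrier G. \<phi> g y = y then 1 else 0"
  have "card E = (\<Sum>x\<in>E. 1)" by simp
  also have "\<dots> = (\<Sum>ob\<in>orbits G E \<phi>. \<Sum>x\<in>ob. 1)" by (rule disjoint_sum[OF fin, symmetric])
  also have "\<dots> = (\<Sum>ob\<in>orbits G E \<phi>. card ob)" by (rule sum.cong) simp_all
  also have "[\<dots> = (\<Sum>ob\<in>orbits G E \<phi>. \<Sum>y\<in>ob. ?fixed y)] (mod p)"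
    by (rule cong_sum) (use card_orbit_cong_fixed_points[OF fin p ord] in \<open>auto simp: orbits_def\<close>)
  also have "(\<Sum>ob\<in>orbits G E \<phi>. \<Sum>y\<in>ob. ?fixed y) = (\<Sum>y\<in>E. ?fixed y)"
    by (rule disjoint_sum[OF fin])
  also have "\<dots> = card {x \<in> E. \<forall>g\<in>carrier G. \<phi> g x = x}"
    by (simp add: sum.inter_filter[OF fin, symmetric])
  finally show ?thesis .
qed

definition centralizer :: "('a, 'b) monoid_scheme \<Rightarrow> 'a \<Rightarrow> 'a set" where
  "centralizer G x = {y \<in> carrier G. x \<otimes>\<^bsub>G\<^esub> y = y \<otimes>\<^bsub>G\<^esub> x}"

definition center :: "('a, 'b) monoid_scheme \<Rightarrow> 'a set" where
  "center G = {x \<in> carrier G. \<forall>y\<in>carrier G. x \<otimes>\<^bsub>G\<^esub> y = y \<otimes>\<^bsub>G\<^esub> x}"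

context group
begin

lemma conjugate_eq_iff: "g \<in> carrier G \<Longrightarrow> x \<in> carrier G \<Longrightarrow> g \<otimes> x \<otimes> inv g = x \<longleftrightarrow> g \<otimes> x = x \<otimes> g"
  by (simp add: inv_solve_right')

lemma centralizer_eq_stabilizer:
  "x \<in> carrier G \<Longrightarrow> centralizer G x = stabilizer G (\<lambda>g. \<lambda>h\<in>carrier G. g \<otimes> h \<otimes> inv g) x"
  by (auto simp: centralizer_def stabilizer_def conjugate_eq_iff)

lemma centralizer_subgroup: "x \<in> carrier G \<Longrightarrow> subgroup (centralizer G x) G"
  using group_action.stabilizer_subgroup[OF action_by_conjugation] centralizer_eq_stabilizer by simp

lemma mem_centralizer_self: "x \<in> carrier G \<Longrightarrow> x \<in> centralizer G x"
  by (simp add: centralizer_def)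

lemma center_subset_centralizer: "x \<in> carrier G \<Longrightarrow> center G \<subseteq> centralizer G x"
  by (auto simp: center_def centralizer_def)

lemma center_eq_Inter_centralizer: "center G = \<Inter> (centralizer G ` carrier G)"
  by (auto simp: center_def centralizer_def)

lemma center_subgroup: "subgroup (center G) G"
  unfolding center_eq_Inter_centralizer
  by (rule subgroups_Inter) (auto simp: centralizer_subgroup)

lemma center_normal: "center G \<lhd> G"
  unfolding normal_inv_iff
proof (intro conjI center_subgroup ballI)
  fix g h assume "g \<in> carrier G" "h \<in> center G"
  moreover from this have "g \<otimes> h \<otimes> inv g = h"
    using conjugate_eq_iff by (auto simp: center_def)
  ultimately show "g \<otimes> h \<otimes> inv g \<in> center G" by simp
qed

lemma center_eq_carrier_iff: "center G = carrier G \<longleftrightarrow> comm_group G"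
  using group_comm_groupI comm_group.axioms(1) comm_monoid.m_comm
  by (fastforce simp: center_def)

lemma prime_dvd_card_center:
  assumes fin: "finite (carrier G)" and p: "Factorial_Ring.prime p" and ord: "order G = p ^ n"
    and n: "n \<ge> 1"
  shows "p dvd card (center G)"
proof -
  have "center G = {x \<in> carrier G. \<forall>g\<in>carrier G. (\<lambda>h\<in>carrier G. g \<otimes> h \<otimes> inv g) x = x}"
    by (auto simp: center_def conjugate_eq_iff)
  then have "[order G = card (center G)] (mod p)"
    using group_action.card_cong_card_fixed_points[OF action_by_conjugation fin p ord]
    by (simp add: order_def)
  moreover have "p dvd order G" using ord n by (simp add: dvd_power)
  ultimately show ?thesis using cong_dvd_iff by blast
qed

lemma card_subgroup_prime_power:
  assumes "Factorial_Ring.prime p" "order G = p ^ n" "subgroup H G"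
  shows "\<exists>i\<le>n. card H = p ^ i"
proof -
  have "card H dvd order G" using lagrange[OF assms(3)] by (metis dvd_triv_right)
  then show ?thesis using assms(1,2) by (simp add: divides_primepow_nat)
qed

lemma card_center_prime_power:
  assumes fin: "finite (carrier G)" and p: "Factorial_Ring.prime p" and ord: "order G = p ^ n"
    and n: "n \<ge> 1"
  shows "\<exists>i. 1 \<le> i \<and> i \<le> n \<and> card (center G) = p ^ i"
proof -
  obtain i where i: "i \<le> n" "card (center G) = p ^ i"
    using card_subgroup_prime_power[OF p ord center_subgroup] by blast
  have "i \<noteq> 0"
  proof
    assume "i = 0"
    then have "p dvd 1" using prime_dvd_card_center[OF assms] i(2) by simp
    then show False using p by simp
  qed
  then show ?thesis using i by (intro exI[of _ i]) auto
qed

lemma subgroup_eq_carrier_if_card: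
  assumes "finite (carrier G)" "subgroup H G" "card H = order G"
  shows "H = carrier G"
  using card_subset_eq[OF assms(1) subgroup.subset[OF assms(2)]] assms(3) by (simp add: order_def)

text \<open>The quotient by the centre is never cyclic of prime order: an element outside the centre
  would have a centralizer strictly between the centre and the whole group.\<close>
lemma center_eq_carrier_if_index_prime:
  assumes fin: "finite (carrier G)" and p: "Factorial_Ring.prime p" and ord: "order G = p ^ Suc m"
    and card_center: "card (center G) = p ^ m"
  shows "center G = carrier G"
proof (rule ccontr)
  assume "center G \<noteq> carrier G"
  then obtain x where x: "x \<in> carrier G" "x \<notin> center G"
    using center_subgroup subgroup.subset by blast
  obtain j where j: "j \<le> Suc m" "card (centralizer G x) = p ^ j"
    using card_subgroup_prime_power[OF p ord centralizer_subgroup[OF x(1)]] by blast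
  have "center G \<subset> centralizer G x"
    using center_subset_centralizer[OF x(1)] mem_centralizer_self[OF x(1)] x(2) by blast
  moreover have "finite (centralizer G x)"
    using fin by (rule finite_subset[rotated]) (simp add: centralizer_def)
  ultimately have "p ^ m < p ^ j" using psubset_card_mono card_center j(2) by metis
  then have "j = Suc m" using j(1) p prime_gt_1_nat power_less_imp_less_exp by fastforce
  then have "centralizer G x = carrier G"
    using subgroup_eq_carrier_if_card[OF fin centralizer_subgroup[OF x(1)]] j(2) ord by simp
  then have "x \<in> center G" using x(1) by (auto simp: center_def centralizer_def)
  with x(2) show False ..
qed

lemma comm_group_if_order_prime_square:
  assumes fin: "finite (carrier G)" and p: "Factorial_Ring.prime p" and ord: "order G = p ^ 2"
  shows "comm_group G"
proof -
  obtain i where i: "1 \<le> i" "i \<le> 2" "card (center G) = p ^ i"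
    using card_center_prime_power[OF fin p ord] by auto
  have "center G = carrier G"
  proof (cases "i = 2")
    case True
    then show ?thesis using subgroup_eq_carrier_if_card[OF fin center_subgroup] i ord by simp
  next
    case False
    with i have "card (center G) = p ^ 1" by (simp add: le_Suc_eq numeral_2_eq_2)
    moreover have "order G = p ^ Suc 1" using ord by (simp add: numeral_2_eq_2)
    ultimately show ?thesis using center_eq_carrier_if_index_prime[OF fin p] by blast
  qed
  then show ?thesis using center_eq_carrier_iff by blast
qed

lemma cyclic_if_order_prime:
  assumes p: "Factorial_Ring.prime p" and ord: "order G = p"
  shows "cyclic_group G"
proof -
  have fin: "finite (carrier G)" using ord p order_gt_0_iff_finite prime_gt_0_nat by metis
  have "carrier G \<noteq> {\<one>}" using ord p by (auto simp: order_def)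
  then obtain y where y: "y \<in> carrier G" "y \<noteq> \<one>" by blast
  have "ord y dvd p" using ord_dvd_group_order[OF y(1)] ord by simp
  moreover have "ord y \<noteq> 1" using ord_eq_1[OF y(1)] y(2) by simp
  ultimately have "ord y = p" using p by (metis prime_nat_iff)
  then have "generate G {y} = carrier G"
    using subgroup_eq_carrier_if_card[OF fin generate_is_subgroup] generate_pow_card[OF y(1)] ord y(1)
    by simp
  then have "subgroup_generated G {y} = G" unfolding subgroup_generated_def using y(1) by simp
  then show ?thesis unfolding cyclic_group_def using y(1) by blast
qed

end

locale nonabelian_order_cube = group G for G (structure) +
  fixes p :: nat
  assumes prime: "Factorial_Ring.prime p" and finite: "finite (carrier G)"
    and order: "order G = p ^ 3" and nonabelian: "\<not> comm_group G"
begin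

lemma p_gt_1: "p > 1"
  using prime prime_gt_1_nat by blast

lemma card_center: "card (center G) = p"
proof -
  obtain i where i: "1 \<le> i" "i \<le> 3" "card (center G) = p ^ i"
    using card_center_prime_power[OF finite prime order] by auto
  have "center G \<noteq> carrier G" using center_eq_carrier_iff nonabelian by blast
  then have "i \<noteq> 3" "i \<noteq> 2"
    using subgroup_eq_carrier_if_card[OF finite center_subgroup] order i(3)
      center_eq_carrier_if_index_prime[OF finite prime, of 2] by (auto simp: numeral_3_eq_3)
  with i show ?thesis by (simp add: numeral_3_eq_3 le_Suc_eq)
qed

lemma exists_central_commutator:
  assumes g: "g \<in> carrier G" and h: "h \<in> carrier G"
  shows "\<exists>z\<in>center G. g \<otimes> h = z \<otimes> (h \<otimes> g)"
proof -
  interpret N: normal "center G" G by (rule center_normal)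
  interpret Q: group "G Mod center G" by (rule N.factorgroup_is_group)
  have "card (rcosets (center G)) * p = p ^ 2 * p"
    using lagrange[OF center_subgroup] card_center order
    by (simp add: power3_eq_cube power2_eq_square)
  then have "order (G Mod center G) = p ^ 2"
    using p_gt_1 by (simp add: order_def FactGroup_def)
  moreover have "finite (carrier (G Mod center G))"
    using finite by (simp add: FactGroup_def RCOSETS_def)
  ultimately have "comm_group (G Mod center G)"
    using Q.comm_group_if_order_prime_square prime by blast
  moreover have "center G #> g \<in> carrier (G Mod center G)"
    and "center G #> h \<in> carrier (G Mod center G)"
    using g h by (auto simp: FactGroup_def intro: rcosetsI[OF subgroup.subset[OF center_subgroup]])
  ultimately have "(center G #> g) <#> (center G #> h) = (center G #> h) <#> (center G #> g)"
    using comm_monoid.m_comm[OF comm_group.axioms(1)] by fastforce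
  then have "center G #> (g \<otimes> h) = center G #> (h \<otimes> g)" using N.rcos_sum g h by simp
  then have "g \<otimes> h \<in> center G #> (h \<otimes> g)"
    using rcos_self[OF m_closed[OF g h] center_subgroup] by simp
  then show ?thesis unfolding r_coset_def by blast
qed

lemma normal_if_center_subset:
  assumes H: "subgroup H G" and "center G \<subseteq> H"
  shows "H \<lhd> G"
  unfolding normal_inv_iff
proof (intro conjI H ballI)
  fix g h assume g: "g \<in> carrier G" and h: "h \<in> H"
  then have hc: "h \<in> carrier G" using subgroup.subset[OF H] by blast
  obtain z where z: "z \<in> center G" "g \<otimes> h = z \<otimes> (h \<otimes> g)"
    using exists_central_commutator[OF g hc] by blast
  then have zc: "z \<in> carrier G" by (simp add: center_def)
  have "g \<otimes> h \<otimes> inv g = z \<otimes> h"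
    using z(2) g hc zc by (simp add: m_assoc)
  then show "g \<otimes> h \<otimes> inv g \<in> H"
    using z(1) assms(2) h subgroup.m_closed[OF H] by auto
qed

lemma ord_ne_cube: "x \<in> carrier G \<Longrightarrow> ord x \<noteq> p ^ 3"
proof
  assume x: "x \<in> carrier G" and "ord x = p ^ 3"
  then have "generate G {x} = carrier G"
    using subgroup_eq_carrier_if_card[OF finite generate_is_subgroup] generate_pow_card order by simp
  then have "carrier G = range (\<lambda>k::int. x [^] k)"
    by (simp add: generate_pow[OF x] full_SetCompr_eq)
  then have "cyclic_group G"
    using cyclic_group x by blast
  then show False using cyclic_imp_abelian_group nonabelian by blast
qed

lemma center_subset_generate_if_ord_square:
  assumes x: "x \<in> carrier G" and ord_x: "ord x = p ^ 2"
  shows "center G \<subseteq> generate G {x}"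
proof -
  let ?N = "generate G {x}"
  have card_N: "card ?N = p ^ 2" using generate_pow_card[OF x] ord_x by simp
  have N_sub: "?N \<subseteq> centralizer G x"
    using mem_centralizer_self[OF x] centralizer_subgroup[OF x]
    by (intro generate_subgroup_incl) auto
  have "x \<notin> center G"
  proof
    assume "x \<in> center G"
    then have "?N \<subseteq> center G" by (intro generate_subgroup_incl center_subgroup) auto
    then have "p ^ 2 \<le> p"
      using card_mono[OF finite_subset[OF _ finite]] card_N card_center
      by (metis center_subgroup subgroup.subset)
    then show False using p_gt_1 by (simp add: power2_eq_square)
  qed
  then have "centralizer G x \<noteq> carrier G"
    using x by (auto simp: center_def centralizer_def)
  then have "card (centralizer G x) \<noteq> p ^ 3"
    using subgroup_eq_carrier_if_card[OF finite centralizer_subgroup[OF x]] order by auto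
  moreover obtain j where j: "j \<le> 3" "card (centralizer G x) = p ^ j"
    using card_subgroup_prime_power[OF prime order centralizer_subgroup[OF x]] by blast
  moreover have "finite (centralizer G x)"
    using finite by (rule finite_subset[rotated]) (simp add: centralizer_def)
  then have "p ^ 2 \<le> p ^ j" using card_mono[OF _ N_sub] card_N j(2) by simp
  then have "2 \<le> j" using power_le_imp_le_exp[OF p_gt_1] by blast
  ultimately have "card (centralizer G x) = card ?N"
    using card_N by (auto simp: le_Suc_eq numeral_3_eq_3 numeral_2_eq_2)
  then have "?N = centralizer G x"
    using card_subset_eq[OF \<open>finite (centralizer G x)\<close> N_sub] by simp
  then show ?thesis using center_subset_centralizer[OF x] by simp
qed

lemma metacyclic_if_ord_square:
  assumes x: "x \<in> carrier G" and ord_x: "ord x = p ^ 2"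
  shows "metacyclic G"
proof -
  let ?N = "generate G {x}"
  have N: "subgroup ?N G" using x by (simp add: generate_is_subgroup)
  have normal: "?N \<lhd> G"
    using normal_if_center_subset[OF N center_subset_generate_if_ord_square[OF assms]] .
  have "cyclic_group (G\<lparr>carrier := ?N\<rparr>)"
    using cyclic_group_generated[of x] x unfolding subgroup_generated_def by simp
  moreover have "cyclic_group (G Mod ?N)"
  proof -
    interpret N: normal ?N G by (rule normal)
    interpret Q: group "G Mod ?N" by (rule N.factorgroup_is_group)
    have "card (rcosets ?N) * p ^ 2 = p ^ 3"
      using lagrange[OF N] generate_pow_card[OF x] ord_x order by simp
    also have "p ^ 3 = p * p ^ 2" by (simp add: numeral_3_eq_3 numeral_2_eq_2)
    finally have "card (rcosets ?N) = p" using p_gt_1 by simp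
    then have "order (G Mod ?N) = p" by (simp add: order_def FactGroup_def)
    then show ?thesis using Q.cyclic_if_order_prime prime by blast
  qed
  ultimately show ?thesis unfolding metacyclic_def using normal by blast
qed

lemma pow_prime_eq_one:
  assumes "\<not> metacyclic G" and x: "x \<in> carrier G"
  shows "x [^] p = \<one>"
proof -
  obtain i where i: "i \<le> 3" "ord x = p ^ i"
    using ord_dvd_group_order[OF x] order prime by (auto simp: divides_primepow_nat)
  moreover have "i \<noteq> 3" using ord_ne_cube[OF x] i by auto
  moreover have "i \<noteq> 2" using metacyclic_if_ord_square[OF x] assms(1) i by auto
  ultimately have "i \<le> 1" by simp
  then have "ord x dvd p" using i(2) by (cases i) auto
  then show ?thesis using pow_eq_id[OF x] by simp
qed

lemma odd_prime:
  assumes "\<not> metacyclic G"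
  shows "odd p"
proof
  assume "even p"
  then have "\<not> p > 2" using prime_odd_nat[OF prime] by blast
  then have p2: "p = 2" using prime_ge_2_nat[OF prime] by simp
  have inv_self: "inv x = x" if x: "x \<in> carrier G" for x
  proof (rule inv_equality[OF _ x x])
    show "x \<otimes> x = \<one>" using pow_prime_eq_one[OF assms x] p2 x by (simp add: numeral_2_eq_2)
  qed
  have "x \<otimes> y = y \<otimes> x" if x: "x \<in> carrier G" and y: "y \<in> carrier G" for x y
  proof -
    have "x \<otimes> y = inv (x \<otimes> y)" using inv_self[OF m_closed[OF x y]] by simp
    also have "\<dots> = y \<otimes> x" using inv_mult_group[OF x y] inv_self[OF x] inv_self[OF y] by simp
    finally show ?thesis .
  qed
  then show False using nonabelian group_comm_groupI by blast
qed

end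

section \<open>Heisenberg coordinates\<close>

context group
begin

lemma int_pow_eq_if_cong:
  assumes "w \<in> carrier G" "w [^] p = \<one>" "[i = j] (mod int p)"
  shows "w [^] (i::int) = w [^] j"
proof -
  have "int (ord w) dvd int p" using pow_eq_id[OF assms(1)] assms(2) by simp
  moreover have "int p dvd j - i" using assms(3) by (simp add: cong_iff_dvd_diff dvd_diff_commute)
  ultimately show ?thesis using int_pow_eq[OF assms(1)] dvd_trans by blast
qed

lemma prime_dvd_if_int_pow_mem:
  assumes p: "Factorial_Ring.prime p" and w: "w \<in> carrier G" "w [^] p = \<one>" "w \<notin> H"
    and H: "subgroup H G" and pow: "w [^] (d::int) \<in> H"
  shows "int p dvd d"
proof (rule ccontr)
  assume "\<not> int p dvd d"
  then have "coprime d (int p)"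
    using prime_imp_coprime[of "int p" d] p by (simp add: coprime_commute prime_nat_int_transfer)
  then obtain e where e: "[d * e = 1] (mod int p)" using cong_solve_coprime_int by blast
  have "(w [^] d) [^] e \<in> H" using subgroup_int_pow_closed[OF H pow] .
  moreover have "(w [^] d) [^] e = w"
    using int_pow_pow[OF w(1)] int_pow_eq_if_cong[OF w(1,2) e] w(1) by simp
  ultimately show False using w(3) by simp
qed

end

locale heisenberg_generators = nonabelian_order_cube +
  fixes u v z
  assumes odd: "odd p" and exponent: "\<And>x. x \<in> carrier G \<Longrightarrow> x [^] p = \<one>"
    and u: "u \<in> carrier G" and v: "v \<in> carrier G" and z_center: "z \<in> center G"
    and not_commute: "u \<otimes> v \<noteq> v \<otimes> u" and commutator: "v \<otimes> u = u \<otimes> v \<otimes> z"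
begin

lemma z: "z \<in> carrier G"
  using z_center by (simp add: center_def)

lemma int_pow_z_commute: "y \<in> carrier G \<Longrightarrow> z [^] (i::int) \<otimes> y = y \<otimes> z [^] i"
  using subgroup_int_pow_closed[OF center_subgroup z_center] by (simp add: center_def)

lemma nat_pow_v_u: "v [^] (n::nat) \<otimes> u = u \<otimes> v [^] n \<otimes> z [^] n"
proof (induction n)
  case (Suc n)
  have "v [^] Suc n \<otimes> u = v [^] n \<otimes> (v \<otimes> u)" using u v by (simp add: m_assoc)
  also have "\<dots> = (v [^] n \<otimes> u) \<otimes> v \<otimes> z" using u v z by (simp add: commutator m_assoc)
  also have "\<dots> = u \<otimes> v [^] n \<otimes> (z [^] n \<otimes> v) \<otimes> z" using u v z by (simp add: Suc m_assoc)
  also have "\<dots> = u \<otimes> v [^] Suc n \<otimes> z [^] Suc n"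
    using int_pow_z_commute[OF v, of "int n", unfolded int_pow_int] u v z by (simp add: m_assoc)
  finally show ?case .
qed (use u in simp)

lemma nat_pow_v_nat_pow_u: "v [^] (n::nat) \<otimes> u [^] (m::nat) = u [^] m \<otimes> v [^] n \<otimes> z [^] (m * n)"
proof (induction m)
  case (Suc m)
  have "v [^] n \<otimes> u [^] Suc m = (u [^] m \<otimes> v [^] n \<otimes> z [^] (m * n)) \<otimes> u"
    using u v by (simp add: Suc flip: m_assoc)
  also have "\<dots> = u [^] m \<otimes> (v [^] n \<otimes> u) \<otimes> z [^] (m * n)"
    using int_pow_z_commute[OF u, of "int (m * n)", unfolded int_pow_int] u v z
    by (simp add: m_assoc)
  also have "\<dots> = u [^] Suc m \<otimes> v [^] n \<otimes> z [^] (Suc m * n)"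
    using u v z by (simp add: nat_pow_v_u m_assoc nat_pow_mult add.commute)
  finally show ?case .
qed (use v in simp)

lemma int_pow_v_int_pow_u:
  assumes "0 \<le> a" "0 \<le> b"
  shows "v [^] (b::int) \<otimes> u [^] (a::int) = u [^] a \<otimes> v [^] b \<otimes> z [^] (a * b)"
  using nat_pow_v_nat_pow_u[of "nat b" "nat a"] assms
  by (metis int_pow_int int_nat_eq nat_mult_distrib of_nat_mult)

lemma int_pow_z_left_commute:
  "y \<in> carrier G \<Longrightarrow> w \<in> carrier G \<Longrightarrow> z [^] (i::int) \<otimes> (y \<otimes> w) = y \<otimes> (z [^] i \<otimes> w)"
  using z by (simp add: int_pow_z_commute[of y] flip: m_assoc)

lemma normal_form_mult:
  fixes a a' b b' c c' :: int
  assumes "0 \<le> a'" "0 \<le> b"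
  shows "u [^] a \<otimes> v [^] b \<otimes> z [^] c \<otimes> (u [^] a' \<otimes> v [^] b' \<otimes> z [^] c') =
    u [^] (a + a') \<otimes> v [^] (b + b') \<otimes> z [^] (a' * b + c + c')"
proof -
  have vu: "v [^] b \<otimes> (u [^] a' \<otimes> w) = u [^] a' \<otimes> (v [^] b \<otimes> (z [^] (a' * b) \<otimes> w))"
    if "w \<in> carrier G" for w
  proof -
    have "v [^] b \<otimes> (u [^] a' \<otimes> w) = (v [^] b \<otimes> u [^] a') \<otimes> w"
      using u v that by (simp add: m_assoc)
    also have "\<dots> = (u [^] a' \<otimes> v [^] b \<otimes> z [^] (a' * b)) \<otimes> w"
      by (simp only: int_pow_v_int_pow_u[OF assms])
    finally show ?thesis using u v z that by (simp add: m_assoc)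
  qed
  have "u [^] a \<otimes> v [^] b \<otimes> z [^] c \<otimes> (u [^] a' \<otimes> v [^] b' \<otimes> z [^] c') =
      u [^] a \<otimes> (v [^] b \<otimes> (z [^] c \<otimes> (u [^] a' \<otimes> (v [^] b' \<otimes> z [^] c'))))"
    using u v z by (simp add: m_assoc)
  also have "\<dots> = u [^] a \<otimes> (v [^] b \<otimes> (u [^] a' \<otimes> (v [^] b' \<otimes> (z [^] c \<otimes> z [^] c'))))"
    using u v z by (simp add: int_pow_z_left_commute)
  also have "\<dots> =
      u [^] a \<otimes> (u [^] a' \<otimes> (v [^] b \<otimes> (z [^] (a' * b) \<otimes> (v [^] b' \<otimes> (z [^] c \<otimes> z [^] c')))))"
    using v z by (simp add: vu)
  also have "\<dots> =
      u [^] a \<otimes> (u [^] a' \<otimes> (v [^] b \<otimes> (v [^] b' \<otimes> (z [^] (a' * b) \<otimes> (z [^] c \<otimes> z [^] c')))))"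
    using v z int_pow_z_left_commute[of "v [^] b'" "z [^] c \<otimes> z [^] c'" "a' * b"] by simp
  also have "\<dots> = u [^] (a + a') \<otimes> v [^] (b + b') \<otimes> z [^] (a' * b + c + c')"
    using u v z by (simp add: int_pow_mult m_assoc)
  finally show ?thesis .
qed

definition coord :: "triple \<Rightarrow> 'a" where
  "coord x =
     (case x of (a, b, c) \<Rightarrow> u [^] a \<otimes> v [^] b \<otimes> z [^] (c + (int p + 1) div 2 * a * b))"

lemma coord_closed: "coord x \<in> carrier G"
  using u v z by (cases x) (simp add: coord_def)

lemma coord_heis_add:
  assumes x: "x \<in> residue_triples (int p)" and y: "y \<in> residue_triples (int p)"
  shows "coord (heis_add (int p) x y) = coord x \<otimes> coord y"
proof -
  obtain a b c a' b' c' where xy: "x = (a, b, c)" "y = (a', b', c')" by (metis prod.exhaust)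
  define h where "h = (int p + 1) div 2"
  have two_h: "2 * h = int p + 1" using odd unfolding h_def by presburger
  have "[(c + c' + h * (a' * b - a * b')) mod p + h * ((a + a') mod p) * ((b + b') mod p) =
      a' * b + (c + h * a * b) + (c' + h * a' * b')] (mod p)"
  proof -
    have "[(c + c' + h * (a' * b - a * b')) mod p + h * ((a + a') mod p) * ((b + b') mod p) =
        c + c' + h * (a' * b - a * b') + h * (a + a') * (b + b')] (mod p)"
      by (intro cong_add cong_mult cong_refl) (simp_all add: cong_def)
    also have "c + c' + h * (a' * b - a * b') + h * (a + a') * (b + b') =
        a' * b + (c + h * a * b) + (c' + h * a' * b') + int p * (a' * b)"
      using two_h by (simp add: algebra_simps)
    also have "[\<dots> = a' * b + (c + h * a * b) + (c' + h * a' * b')] (mod p)"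
      by (simp add: cong_def)
    finally show ?thesis .
  qed
  then have "z [^] ((c + c' + h * (a' * b - a * b')) mod p + h * ((a + a') mod p) * ((b + b') mod p)) =
      z [^] (a' * b + (c + h * a * b) + (c' + h * a' * b'))"
    by (rule int_pow_eq_if_cong[OF z exponent[OF z]])
  moreover have "u [^] ((a + a') mod p) = u [^] (a + a')" "v [^] ((b + b') mod p) = v [^] (b + b')"
    by (rule int_pow_eq_if_cong[OF _ exponent]; simp add: u v cong_def)+
  moreover have "coord x \<otimes> coord y = u [^] (a + a') \<otimes> v [^] (b + b') \<otimes>
      z [^] (a' * b + (c + h * a * b) + (c' + h * a' * b'))"
    using x y unfolding xy coord_def h_def by (simp add: normal_form_mult)
  ultimately show ?thesis
    unfolding xy coord_def heis_add_def h_def by simp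
qed

lemma z_ne_one: "z \<noteq> \<one>"
  using commutator not_commute u v by auto

lemma ord_z: "ord z = p"
proof -
  have "ord z dvd p" using pow_eq_id[OF z] exponent[OF z] by simp
  moreover have "ord z \<noteq> 1" using ord_eq_1[OF z] z_ne_one by simp
  ultimately show ?thesis using prime by (metis prime_nat_iff)
qed

lemma coord_eq_one:
  assumes x: "x \<in> residue_triples (int p)" and one: "coord x = \<one>"
  shows "x = (0, 0, 0)"
proof -
  obtain a b c where xx: "x = (a, b, c)" by (metis prod.exhaust)
  have range: "0 \<le> a" "a < p" "0 \<le> b" "b < p" "0 \<le> c" "c < p" using x xx by auto
  have zero_if_dvd: "t = 0" if "0 \<le> t" "t < int p" "int p dvd t" for t :: int
    using that zdvd_imp_le[of "int p" t] by (cases "t = 0") auto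
  define c' where "c' = c + (int p + 1) div 2 * a * b"
  have uvz: "u [^] a \<otimes> (v [^] b \<otimes> z [^] c') = \<one>"
    using one u v z unfolding xx coord_def c'_def by (simp add: m_assoc)
  have "v [^] b \<in> centralizer G v" "z [^] c' \<in> centralizer G v"
    using subgroup_int_pow_closed[OF centralizer_subgroup[OF v] mem_centralizer_self[OF v]]
      subgroup_int_pow_closed[OF center_subgroup z_center] center_subset_centralizer[OF v] by blast+
  then have "inv (v [^] b \<otimes> z [^] c') \<in> centralizer G v"
    using centralizer_subgroup[OF v] by (simp add: subgroup.m_closed subgroup.m_inv_closed)
  moreover have "u [^] a = inv (v [^] b \<otimes> z [^] c')"
    using inv_equality[OF uvz] u v z by simp
  ultimately have "u [^] a \<in> centralizer G v" by simp
  moreover have "u \<notin> centralizer G v" using not_commute by (simp add: centralizer_def)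
  ultimately have "int p dvd a"
    using prime_dvd_if_int_pow_mem[OF prime u exponent[OF u] _ centralizer_subgroup[OF v]] by blast
  then have a0: "a = 0" using zero_if_dvd[OF range(1,2)] by blast
  with uvz have "v [^] b \<otimes> z [^] c = \<one>" using v z by (simp add: c'_def)
  then have "v [^] b = inv (z [^] c)"
    using inv_equality[of "v [^] b" "z [^] c"] v z by simp
  then have "v [^] b \<in> center G"
    using subgroup_int_pow_closed[OF center_subgroup z_center] subgroup.m_inv_closed[OF center_subgroup]
    by simp
  moreover have "v \<notin> center G" using not_commute u by (auto simp: center_def intro!: bexI[of _ u])
  ultimately have "int p dvd b"
    using prime_dvd_if_int_pow_mem[OF prime v exponent[OF v] _ center_subgroup] by blast
  then have b0: "b = 0" using zero_if_dvd[OF range(3,4)] by blast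
  with \<open>v [^] b \<otimes> z [^] c = \<one>\<close> have "z [^] c = \<one>" using z by simp
  then have "int p dvd c" using int_pow_eq_id[OF z] ord_z by simp
  then have "c = 0" using zero_if_dvd[OF range(5,6)] by blast
  with a0 b0 xx show ?thesis by simp
qed

lemma inj_on_coord: "inj_on coord (residue_triples (int p))"
proof (rule inj_onI)
  fix x y assume x: "x \<in> residue_triples (int p)" and y: "y \<in> residue_triples (int p)"
    and eq: "coord x = coord y"
  have p0: "int p > 0" using p_gt_1 by simp
  have "coord (heis_add p x (heis_neg p y)) = coord (heis_add p y (heis_neg p y))"
    using coord_heis_add[OF x heis_neg_closed[OF p0]] coord_heis_add[OF y heis_neg_closed[OF p0]] eq
    by simp
  also have "\<dots> = \<one>"
    using u v z by (simp add: heis_add_neg coord_def)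
  finally show "x = y"
    using heis_add_neg_eq_zero_imp_eq[OF x y] coord_eq_one heis_add_closed[OF p0] by blast
qed

lemma bij_betw_coord: "bij_betw coord (residue_triples (int p)) (carrier G)"
proof -
  have "coord ` residue_triples (int p) \<subseteq> carrier G" using coord_closed by auto
  moreover have "card (coord ` residue_triples (int p)) = card (carrier G)"
    using card_image[OF inj_on_coord] card_residue_triples order by (simp add: order_def)
  ultimately have "coord ` residue_triples (int p) = carrier G"
    using card_subset_eq[OF finite] by blast
  then show ?thesis using inj_on_coord by (simp add: bij_betw_def)
qed

end

lemma (in nonabelian_order_cube) exists_heisenberg_coordinates:
  assumes "\<not> metacyclic G"
  obtains F where "bij_betw F (residue_triples (int p)) (carrier G)"
    and "\<And>x y. x \<in> residue_triples (int p) \<Longrightarrow> y \<in> residue_triples (int p) \<Longrightarrow>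
      F (heis_add p x y) = F x \<otimes> F y"
proof -
  obtain u v where uv: "u \<in> carrier G" "v \<in> carrier G" "u \<otimes> v \<noteq> v \<otimes> u"
    using nonabelian group_comm_groupI by blast
  obtain z where z: "z \<in> center G" "v \<otimes> u = z \<otimes> (u \<otimes> v)"
    using exists_central_commutator[OF uv(2,1)] by blast
  then have "v \<otimes> u = u \<otimes> v \<otimes> z" using uv by (simp add: center_def)
  then interpret heisenberg_generators G p u v z
    using odd_prime[OF assms] pow_prime_eq_one[OF assms] uv z by unfold_locales auto
  show ?thesis using that bij_betw_coord coord_heis_add by blast
qed

section \<open>The nearrings on \<open>G\<close>\<close>

lemma group_monoid_record:
  "group G \<Longrightarrow> group \<lparr>carrier = carrier G, monoid.mult = monoid.mult G, one = \<one>\<^bsub>G\<^esub>, \<dots> = m\<rparr>"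
  unfolding group_def group_axioms_def monoid_def Units_def by simp

definition coord_nearring ::
    "('g, 'x) monoid_scheme \<Rightarrow> int \<Rightarrow> (triple \<Rightarrow> 'g) \<Rightarrow> nat \<Rightarrow> bool \<Rightarrow> 'g ring" where
  "coord_nearring G q F k s =
     (let F' = inv_into (residue_triples q) F in
      \<lparr>carrier = carrier G, monoid.mult = (\<lambda>a b. F (nr_mult q k s (F' a) (F' b))),
       one = F (1, 0, 0), ring.zero = \<one>\<^bsub>G\<^esub>, ring.add = (\<otimes>\<^bsub>G\<^esub>)\<rparr>)"

locale heisenberg_coordinates = group G for G (structure) +
  fixes q :: int and F :: "triple \<Rightarrow> 'a"
  assumes prime: "Factorial_Ring.prime q" and odd: "odd q"
    and bij: "bij_betw F (residue_triples q) (carrier G)"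
    and hom: "\<And>x y. x \<in> residue_triples q \<Longrightarrow> y \<in> residue_triples q \<Longrightarrow>
      F (heis_add q x y) = F x \<otimes> F y"
begin

abbreviation "F' \<equiv> inv_into (residue_triples q) F"

lemma q_gt_1: "q > 1"
  using prime prime_gt_1_int by blast

lemma q_pos: "q > 0"
  using q_gt_1 by simp

lemma unit_triple_mem: "(1, 0, 0) \<in> residue_triples q"
  using q_gt_1 by simp

lemma F_closed: "x \<in> residue_triples q \<Longrightarrow> F x \<in> carrier G"
  and inv_F_closed: "a \<in> carrier G \<Longrightarrow> F' a \<in> residue_triples q"
  and inv_F_F: "x \<in> residue_triples q \<Longrightarrow> F' (F x) = x"
  and F_inv_F: "a \<in> carrier G \<Longrightarrow> F (F' a) = a"
  using bij bij_betw_inv_into[OF bij]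
  by (auto simp: bij_betw_inv_into_left bij_betw_inv_into_right bij_betwE)

lemma F_zero: "F (0, 0, 0) = \<one>"
proof -
  have zero: "(0, 0, 0) \<in> residue_triples q" using q_pos by simp
  have "F (0, 0, 0) \<otimes> F (0, 0, 0) = F (0, 0, 0)"
    using hom[OF zero zero] by (simp add: heis_add_def)
  then show ?thesis using F_closed[OF zero] by (metis l_one one_closed right_cancel)
qed

abbreviation R :: "nat \<Rightarrow> bool \<Rightarrow> 'a ring" where
  "R k s \<equiv> coord_nearring G q F k s"

lemma coord_nearring_simps:
  "carrier (R k s) = carrier G" "ring.add (R k s) = monoid.mult G" "ring.zero (R k s) = \<one>"
  "one (R k s) = F (1, 0, 0)" "a \<otimes>\<^bsub>R k s\<^esub> b = F (nr_mult q k s (F' a) (F' b))"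
  by (simp_all add: coord_nearring_def Let_def)

lemma mult_F_F:
  "x \<in> residue_triples q \<Longrightarrow> y \<in> residue_triples q \<Longrightarrow> F x \<otimes>\<^bsub>R k s\<^esub> F y = F (nr_mult q k s x y)"
  by (simp add: coord_nearring_simps inv_F_F)

lemma add_monoid_coord_nearring:
  "add_monoid (R k s) = \<lparr>carrier = carrier G, monoid.mult = monoid.mult G, one = \<one>, \<dots> = undefined\<rparr>"
  by (simp add: coord_nearring_simps)

lemma group_add_monoid: "group (add_monoid (R k s))"
  unfolding add_monoid_coord_nearring by (rule group_monoid_record[OF is_group])

lemma add_monoid_iso: "add_monoid (R k s) \<cong> G"
proof (rule is_isoI)
  show "(\<lambda>a. a) \<in> iso (add_monoid (R k s)) G"
    by (simp add: iso_def hom_def bij_betw_def coord_nearring_simps)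
qed

lemma coord_nearring_mult_closed: "a \<in> carrier G \<Longrightarrow> b \<in> carrier G \<Longrightarrow> a \<otimes>\<^bsub>R k s\<^esub> b \<in> carrier G"
  by (simp add: coord_nearring_simps F_closed nr_mult_closed q_pos)

lemma subgroup_nonunits: "subgroup (F ` {x \<in> residue_triples q. fst x = 0}) G"
proof (rule subgroupI)
  let ?L = "{x \<in> residue_triples q. fst x = 0}"
  show "F ` ?L \<subseteq> carrier G" using F_closed by auto
  show "F ` ?L \<noteq> {}" using q_pos by auto
  fix a b assume "a \<in> F ` ?L" "b \<in> F ` ?L"
  then obtain x y where x: "x \<in> ?L" "a = F x" and y: "y \<in> ?L" "b = F y" by blast
  have "fst (heis_add q x y) = 0" "fst (heis_neg q x) = 0"
    using x y by (cases x, cases y, simp add: heis_add_def)+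
  moreover have "a \<otimes> b = F (heis_add q x y)" using hom x y by simp
  moreover have "a \<otimes> F (heis_neg q x) = \<one>"
    using hom[of x "heis_neg q x"] x heis_neg_closed[OF q_pos] by (simp add: heis_add_neg F_zero)
  then have "inv a = F (heis_neg q x)"
    using inv_equality[OF inv_comm] x F_closed heis_neg_closed[OF q_pos] by simp
  ultimately show "a \<otimes> b \<in> F ` ?L" "inv a \<in> F ` ?L"
    using heis_add_closed[OF q_pos] heis_neg_closed[OF q_pos] by auto
qed

context
  fixes k :: nat and s :: bool
  assumes ks: "s \<longrightarrow> k = 2"
begin

lemma coord_nearring_monoid: "monoid (R k s)"
proof (rule monoidI)
  fix a b c assume "a \<in> carrier (R k s)" "b \<in> carrier (R k s)" "c \<in> carrier (R k s)"
  then show "a \<otimes>\<^bsub>R k s\<^esub> b \<otimes>\<^bsub>R k s\<^esub> c = a \<otimes>\<^bsub>R k s\<^esub> (b \<otimes>\<^bsub>R k s\<^esub> c)"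
    by (simp add: coord_nearring_simps inv_F_F inv_F_closed nr_mult_closed q_pos
        nr_mult_assoc[OF ks])
next
  fix a assume "a \<in> carrier (R k s)"
  with unit_triple_mem show "\<one>\<^bsub>R k s\<^esub> \<otimes>\<^bsub>R k s\<^esub> a = a" "a \<otimes>\<^bsub>R k s\<^esub> \<one>\<^bsub>R k s\<^esub> = a"
    by (simp_all add: coord_nearring_simps inv_F_F inv_F_closed F_inv_F nr_mult_one_left
        nr_mult_one_right)
qed (use q_gt_1 F_closed coord_nearring_mult_closed in \<open>simp_all add: coord_nearring_simps(1,4)\<close>)

lemma coord_nearring_nearring: "nearring (R k s)"
  unfolding nearring_def
proof (intro conjI ballI group_add_monoid)
  fix a b c assume abc: "a \<in> carrier (R k s)" "b \<in> carrier (R k s)" "c \<in> carrier (R k s)"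
  then show "a \<otimes>\<^bsub>R k s\<^esub> b \<in> carrier (R k s)" "a \<otimes>\<^bsub>R k s\<^esub> b \<otimes>\<^bsub>R k s\<^esub> c = a \<otimes>\<^bsub>R k s\<^esub> (b \<otimes>\<^bsub>R k s\<^esub> c)"
    using coord_nearring_mult_closed monoid.m_assoc[OF coord_nearring_monoid]
    by (simp_all add: coord_nearring_simps(1))
  have "b \<otimes> c = F (heis_add q (F' b) (F' c))"
    using abc hom inv_F_closed F_inv_F by (simp add: coord_nearring_simps(1))
  then have "a \<otimes>\<^bsub>R k s\<^esub> (b \<oplus>\<^bsub>R k s\<^esub> c) = F (nr_mult q k s (F' a) (heis_add q (F' b) (F' c)))"
    by (simp add: coord_nearring_simps inv_F_F heis_add_closed q_pos)
  also have "\<dots> = F (heis_add q (nr_mult q k s (F' a) (F' b)) (nr_mult q k s (F' a) (F' c)))"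
    by (simp add: nr_mult_heis_add_distrib)
  also have "\<dots> = a \<otimes>\<^bsub>R k s\<^esub> b \<oplus>\<^bsub>R k s\<^esub> a \<otimes>\<^bsub>R k s\<^esub> c"
    using hom nr_mult_closed q_pos by (simp add: coord_nearring_simps)
  finally show "a \<otimes>\<^bsub>R k s\<^esub> (b \<oplus>\<^bsub>R k s\<^esub> c) = a \<otimes>\<^bsub>R k s\<^esub> b \<oplus>\<^bsub>R k s\<^esub> a \<otimes>\<^bsub>R k s\<^esub> c" .
qed

lemma units_coord_nearring: "Units (R k s) = F ` {x \<in> residue_triples q. fst x \<noteq> 0}"
proof
  show "Units (R k s) \<subseteq> F ` {x \<in> residue_triples q. fst x \<noteq> 0}"
  proof
    fix a assume "a \<in> Units (R k s)"
    then obtain b where ab: "a \<in> carrier G" "b \<in> carrier G" "b \<otimes>\<^bsub>R k s\<^esub> a = F (1, 0, 0)"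
      unfolding Units_def by (auto simp: coord_nearring_simps)
    then have "nr_mult q k s (F' b) (F' a) = (1, 0, 0)"
      using bij_betw_imp_inj_on[OF bij] inv_F_closed nr_mult_closed[OF q_pos] unit_triple_mem
      by (simp add: coord_nearring_simps inj_on_eq_iff)
    then have "fst (F' a) \<noteq> 0" using fst_nr_mult[of q k s "F' b" "F' a"] by auto
    then have "F' a \<in> {x \<in> residue_triples q. fst x \<noteq> 0}" using inv_F_closed ab(1) by simp
    then show "a \<in> F ` {x \<in> residue_triples q. fst x \<noteq> 0}"
      by (rule image_eqI[where f = F, OF F_inv_F[OF ab(1), symmetric]])
  qed
next
  show "F ` {x \<in> residue_triples q. fst x \<noteq> 0} \<subseteq> Units (R k s)"
  proof
    fix a assume "a \<in> F ` {x \<in> residue_triples q. fst x \<noteq> 0}"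
    then obtain x where x: "x \<in> residue_triples q" "fst x \<noteq> 0" "a = F x" by blast
    then obtain y where y: "y \<in> residue_triples q"
      "nr_mult q k s x y = (1, 0, 0)" "nr_mult q k s y x = (1, 0, 0)"
      using exists_nr_mult_inverse[OF prime ks] by blast
    then have "F y \<otimes>\<^bsub>R k s\<^esub> F x = \<one>\<^bsub>R k s\<^esub>" "F x \<otimes>\<^bsub>R k s\<^esub> F y = \<one>\<^bsub>R k s\<^esub>"
      using x by (simp_all add: mult_F_F coord_nearring_simps(4))
    then show "a \<in> Units (R k s)"
      unfolding Units_def using x F_closed[OF x(1)] F_closed[OF y(1)]
      by (auto simp: coord_nearring_simps(1) intro!: bexI[of _ "F y"])
  qed
qed

lemma nonunits_coord_nearring:
  "carrier (R k s) - Units (R k s) = F ` {x \<in> residue_triples q. fst x = 0}"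
proof -
  have "{x \<in> residue_triples q. fst x = 0} =
      residue_triples q - {x \<in> residue_triples q. fst x \<noteq> 0}" by blast
  then show ?thesis
    using bij inj_on_image_set_diff[OF bij_betw_imp_inj_on[OF bij]]
    by (simp add: units_coord_nearring coord_nearring_simps(1) bij_betw_def)
qed

lemma local_coord_nearring: "local_nearring (R k s)"
  unfolding local_nearring_def nearring_with_identity_def
proof (intro conjI coord_nearring_nearring coord_nearring_monoid)
  have "m_inv (add_monoid (R k s)) a = inv a" for a
    by (simp add: m_inv_def coord_nearring_simps)
  then show "subgroup (carrier (R k s) - Units (R k s)) (add_monoid (R k s))"
    using subgroup_nonunits unfolding nonunits_coord_nearring add_monoid_coord_nearring subgroup_def
    by simp
qed

end

lemma coord_iso_if_nearring_iso:
  assumes ks: "s \<longrightarrow> k = 2" and ks': "s' \<longrightarrow> k' = 2"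
    and iso: "nearring_iso (R k s) (R k' s')"
  obtains g where "coord_iso q k s k' s' g"
proof -
  obtain f where f: "bij_betw f (carrier G) (carrier G)"
    and f_add: "\<And>a b. a \<in> carrier G \<Longrightarrow> b \<in> carrier G \<Longrightarrow> f (a \<otimes> b) = f a \<otimes> f b"
    and f_mult: "\<And>a b. a \<in> carrier G \<Longrightarrow> b \<in> carrier G \<Longrightarrow>
      f (a \<otimes>\<^bsub>R k s\<^esub> b) = f a \<otimes>\<^bsub>R k' s'\<^esub> f b"
    using iso unfolding nearring_iso_def by (auto simp: coord_nearring_simps)
  define g where "g = F' \<circ> f \<circ> F"
  have f_closed: "a \<in> carrier G \<Longrightarrow> f a \<in> carrier G" for a using f bij_betwE by blast
  have F_g: "x \<in> residue_triples q \<Longrightarrow> F (g x) = f (F x)" for x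
    unfolding g_def using F_inv_F f_closed F_closed by simp
  have g_closed: "x \<in> residue_triples q \<Longrightarrow> g x \<in> residue_triples q" for x
    unfolding g_def using inv_F_closed f_closed F_closed by simp
  have "coord_iso q k s k' s' g"
  proof
    show "bij_betw g (residue_triples q) (residue_triples q)"
      using bij_betw_trans[OF bij_betw_trans[OF bij f] bij_betw_inv_into[OF bij]]
      by (simp add: g_def comp_assoc)
    fix x y assume x: "x \<in> residue_triples q" and y: "y \<in> residue_triples q"
    have "g (heis_add q x y) = F' (F (g x) \<otimes> F (g y))"
      using hom x y f_add F_closed F_g by (simp add: g_def)
    also have "\<dots> = heis_add q (g x) (g y)"
      using hom[OF g_closed[OF x] g_closed[OF y], symmetric] inv_F_F heis_add_closed[OF q_pos]
      by simp
    finally show "g (heis_add q x y) = heis_add q (g x) (g y)" .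
    have "g (nr_mult q k s x y) = F' (F (g x) \<otimes>\<^bsub>R k' s'\<^esub> F (g y))"
      using mult_F_F[OF x y, symmetric] f_mult[OF F_closed[OF x] F_closed[OF y]] F_g x y
      by (simp add: g_def)
    also have "\<dots> = nr_mult q k' s' (g x) (g y)"
      using mult_F_F[OF g_closed[OF x] g_closed[OF y]] inv_F_F nr_mult_closed[OF q_pos] by simp
    finally show "g (nr_mult q k s x y) = nr_mult q k' s' (g x) (g y)" .
  qed (rule prime odd)+
  then show ?thesis using that by blast
qed

end

definition family_exp :: "nat \<Rightarrow> nat \<Rightarrow> nat" where
  "family_exp p i = (if i < p then i else 2)"

definition family_twist :: "nat \<Rightarrow> nat \<Rightarrow> bool" where
  "family_twist p i \<longleftrightarrow> p \<le> i"

lemma family_twist_imp_exp: "family_twist p i \<longrightarrow> family_exp p i = 2"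
  by (simp add: family_exp_def family_twist_def)

lemma coord_iso_family_eq:
  assumes p: "Factorial_Ring.prime p" "odd p" and ij: "i \<le> p" "j \<le> p"
    and iso: "coord_iso p (family_exp p i) (family_twist p i) (family_exp p j) (family_twist p j) g"
  shows "i = j"
proof -
  interpret coord_iso p "family_exp p i" "family_twist p i" "family_exp p j" "family_twist p j" g
    by (rule iso)
  interpret inv: coord_iso p "family_exp p j" "family_twist p j" "family_exp p i" "family_twist p i"
      "inv_into (residue_triples p) g"
    by (rule coord_iso_inv[OF iso])
  have "2 < p" using prime_ge_2_nat[OF p(1)] p(2) by (cases "p = 2") auto
  then have "family_exp p i < p" "family_exp p j < p" using ij by (auto simp: family_exp_def)
  then have exp: "family_exp p i = family_exp p j" by (rule exp_unique[OF refl])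
  show ?thesis
  proof (cases "i < p \<and> j < p")
    case True
    then show ?thesis using exp by (simp add: family_exp_def)
  next
    case False
    then have "i = p \<or> j = p" using ij by auto
    moreover have "i = j" if "j = p" "i < p"
      using inv.twisted_imp_twisted that exp by (simp add: family_exp_def family_twist_def)
    moreover have "i = j" if "i = p" "j < p"
      using twisted_imp_twisted that exp by (simp add: family_exp_def family_twist_def)
    ultimately show ?thesis using ij by (cases "i < p"; cases "j < p") auto
  qed
qed

theorem theorem2:
  fixes G :: "('g, 'x) monoid_scheme" and p :: nat
  assumes "Factorial_Ring.prime p"
    and "group G"
    and "finite (carrier G)"
    and "order G = p ^ 3"
    and "\<not> comm_group G"
    and "\<not> metacyclic G"
  shows "\<exists>N :: nat \<Rightarrow> 'g ring.
           (\<forall>i < p + 1. local_nearring (N i) \<and> add_monoid (N i) \<cong> G) \<and>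
           (\<forall>i < p + 1. \<forall>j < p + 1. i \<noteq> j \<longrightarrow> \<not> nearring_iso (N i) (N j))"
proof -
  interpret nonabelian_order_cube G p
    by (rule nonabelian_order_cube.intro[OF assms(2)]) (unfold_locales; fact assms)
  have odd: "odd p" using odd_prime[OF assms(6)] .
  obtain F where "bij_betw F (residue_triples (int p)) (carrier G)"
    and "\<And>x y. x \<in> residue_triples (int p) \<Longrightarrow> y \<in> residue_triples (int p) \<Longrightarrow>
      F (heis_add p x y) = F x \<otimes>\<^bsub>G\<^esub> F y"
    using exists_heisenberg_coordinates[OF assms(6)] by blast
  then interpret heisenberg_coordinates G "int p" F
    using assms(1) odd by unfold_locales (simp_all add: prime_nat_int_transfer)
  define N where "N i = coord_nearring G p F (family_exp p i) (family_twist p i)" for i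
  have "local_nearring (N i) \<and> add_monoid (N i) \<cong> G" for i
    unfolding N_def using local_coord_nearring add_monoid_iso family_twist_imp_exp by blast
  moreover have "i = j" if ij: "i < p + 1" "j < p + 1" and iso: "nearring_iso (N i) (N j)" for i j
  proof -
    obtain g
      where "coord_iso p (family_exp p i) (family_twist p i) (family_exp p j) (family_twist p j) g"
      using coord_iso_if_nearring_iso family_twist_imp_exp iso unfolding N_def by metis
    then show "i = j" using coord_iso_family_eq assms(1) odd ij by simp
  qed
  ultimately show ?thesis by blast
qed

end
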